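(* Let $\mathbb{K}$ be a field containing a primitive $n$-th root of unity $\zeta_n$, let $g\ge1$, and let $(A_1,B_1,\dots,A_g,B_g)\in\operatorname{Sl}_n(\mathbb{K})^{2g}$ satisfy $[A_1,B_1]\cdots[A_g,B_g]=\zeta_n I$, where $[A,B]=ABA^{-1}B^{-1}$. If $Z\in\mathbb{K}^{n\times n}$ commutes with all the $A_i$ and $B_i$, then $Z$ is a scalar multiple of the identity. *)

theory Defs
  imports "HOL-Analysis.Analysis"
begin

definition primitive_root_of_unity :: "'a::field \<Rightarrow> nat \<Rightarrow> bool" where
  "primitive_root_of_unity z n \<longleftrightarrow> 0 < n \<and> z ^ n = 1 \<and> (\<forall>k. 0 < k \<and> k < n \<longrightarrow> z ^ k \<noteq> 1)"

definition SL :: "('a::field ^ 'n::finite ^ 'n) set" where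
  "SL = {M. det M = 1}"

definition mcomm :: "'a::field ^ 'n::finite ^ 'n \<Rightarrow> 'a ^ 'n ^ 'n \<Rightarrow> 'a ^ 'n ^ 'n" where
  "mcomm A B = A ** B ** matrix_inv A ** matrix_inv B"

text \<open>Ordered product [A_0,B_0] [A_1,B_1] ... [A_(g-1),B_(g-1)].\<close>
definition comm_prod :: "nat \<Rightarrow> (nat \<Rightarrow> 'a::field ^ 'n::finite ^ 'n) \<Rightarrow> (nat \<Rightarrow> 'a ^ 'n ^ 'n) \<Rightarrow> 'a ^ 'n ^ 'n" where
  "comm_prod g A B = foldr (\<lambda>i M. mcomm (A i) (B i) ** M) [0..<g] (mat 1)"

end

theory Submission
  imports Defs "HOL-Algebra.Algebraic_Closure_Type"
begin

(* Over the algebraic closure Z has an eigenvalue \<theta>, and Y = Z - \<theta> I is singular and commutes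
   with all A_i, B_i, so its kernel E is invariant under them. In a basis adapted to E, the determinant
   of the diagonal block on E is multiplicative on the stabiliser of E; it therefore sends every
   commutator to 1, hence sends \<zeta> I = [A_1,B_1]...[A_g,B_g] to 1, while it sends \<zeta> I to \<zeta>^(dim E).
   Since \<zeta> is a primitive n-th root of unity, E cannot be a proper nonzero subspace, so Y = 0. *)

lemma matrix_inv_right_left:
  fixes A :: "'a::field^'n^'n"
  assumes "invertible A"
  shows matrix_inv_right: "A ** matrix_inv A = mat 1"
    and matrix_inv_left: "matrix_inv A ** A = mat 1"
proof -
  have "\<exists>A'. A ** A' = mat 1 \<and> A' ** A = mat 1" using assms by (simp add: invertible_def)
  hence "A ** matrix_inv A = mat 1 \<and> matrix_inv A ** A = mat 1"
    unfolding matrix_inv_def by (rule someI_ex)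
  thus "A ** matrix_inv A = mat 1" "matrix_inv A ** A = mat 1" by auto
qed

lemma matrix_inv_unique:
  fixes A :: "'a::field^'n^'n"
  assumes "A ** B = mat 1" "B ** A = mat 1"
  shows "matrix_inv A = B"
proof -
  have "invertible A" using assms unfolding invertible_def by blast
  hence "matrix_inv A = matrix_inv A ** (A ** B)" using assms by simp
  also have "\<dots> = B" by (simp add: matrix_mul_assoc matrix_inv_left[OF \<open>invertible A\<close>])
  finally show ?thesis .
qed

lemma mat_mult_commute: "mat c ** M = M ** (mat c :: 'a::comm_ring_1^'n^'n)"
  by (simp add: vec_eq_iff matrix_matrix_mult_def mat_def if_distrib if_distribR sum.delta sum.delta'
      mult.commute cong: if_cong)

lemma matrix_diff_rdistrib: "(M - N) ** W = M ** W - N ** (W::'a::comm_ring_1^'n^'n)"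
  by (simp add: vec_eq_iff matrix_matrix_mult_def sum_subtractf left_diff_distrib)

lemma matrix_diff_ldistrib: "W ** (M - N) = W ** M - W ** (N::'a::comm_ring_1^'n^'n)"
  by (simp add: vec_eq_iff matrix_matrix_mult_def sum_subtractf right_diff_distrib)

lemma matrix_vector_mult_axis: "((M::'a::comm_ring_1^'n^'n) *v axis j 1) $ i = M $ i $ j"
  by (simp add: matrix_vector_mult_def axis_def if_distrib if_distribR sum.delta' cong: if_cong)

definition centralizer :: "'a::semiring_1^'n^'n \<Rightarrow> ('a^'n^'n) set" where
  "centralizer Y = {W. Y ** W = W ** Y}"

lemma mat_in_centralizer: "mat c \<in> centralizer (Y :: 'a::comm_ring_1^'n^'n)"
  by (simp add: centralizer_def mat_mult_commute)

lemma mult_in_centralizer: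
  "V \<in> centralizer Y \<Longrightarrow> W \<in> centralizer Y \<Longrightarrow> V ** W \<in> centralizer Y"
  unfolding centralizer_def by (simp add: matrix_mul_assoc) (simp flip: matrix_mul_assoc)

lemma matrix_inv_in_centralizer:
  fixes W :: "'a::field^'n^'n"
  assumes "invertible W" "W \<in> centralizer Y"
  shows "matrix_inv W \<in> centralizer Y"
proof -
  have "Y ** matrix_inv W = matrix_inv W ** (W ** Y) ** matrix_inv W"
    by (simp add: matrix_mul_assoc matrix_inv_left[OF assms(1)])
  also have "\<dots> = matrix_inv W ** (Y ** W) ** matrix_inv W"
    using assms(2) by (simp add: centralizer_def)
  also have "\<dots> = matrix_inv W ** Y"
    by (simp flip: matrix_mul_assoc add: matrix_inv_right[OF assms(1)])
  finally show ?thesis by (simp add: centralizer_def)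
qed

lemma mcomm_in_centralizer:
  fixes A B :: "'a::field^'n^'n"
  assumes "invertible A" "invertible B" "A \<in> centralizer Y" "B \<in> centralizer Y"
  shows "mcomm A B \<in> centralizer Y"
  unfolding mcomm_def using assms by (intro mult_in_centralizer matrix_inv_in_centralizer)

lemma kernel_invariant_centralizer:
  assumes "W \<in> centralizer Y" "Y *v v = 0"
  shows "Y *v (W *v v) = 0"
proof -
  have "Y *v (W *v v) = W *v (Y *v v)"
    using assms(1) by (simp add: centralizer_def matrix_vector_mul_assoc)
  thus ?thesis using assms(2) by (simp add: matrix_vector_mult_0_right)
qed

definition coordinate_subspace :: "'n set \<Rightarrow> ('a::zero^'n) set" where
  "coordinate_subspace S = {x. \<forall>i. i \<notin> S \<longrightarrow> x $ i = 0}"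

definition principal_block :: "'n set \<Rightarrow> 'a::zero_neq_one^'n^'n \<Rightarrow> 'a^'n^'n" where
  "principal_block S M = (\<chi> i j. if i \<in> S \<and> j \<in> S then M$i$j else if i = j then 1 else 0)"

lemma coordinate_subspace_invariant_entries:
  fixes N :: "'a::comm_ring_1^'n^'n"
  assumes "\<forall>v\<in>coordinate_subspace S. N *v v \<in> coordinate_subspace S" "i \<notin> S" "j \<in> S"
  shows "N $ i $ j = 0"
proof -
  have "axis j 1 \<in> coordinate_subspace S"
    using assms(3) by (auto simp: coordinate_subspace_def axis_def)
  hence "N *v axis j 1 \<in> coordinate_subspace S" using assms(1) by blast
  thus ?thesis using assms(2) by (simp add: coordinate_subspace_def matrix_vector_mult_axis)
qed

lemma principal_block_mult:
  fixes M N :: "'a::comm_ring_1^'n^'n"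
  assumes "\<forall>v\<in>coordinate_subspace S. N *v v \<in> coordinate_subspace S"
  shows "principal_block S (M ** N) = principal_block S M ** principal_block S N"
proof -
  have N0: "N $ l $ j = 0" if "l \<notin> S" "j \<in> S" for l j
    using coordinate_subspace_invariant_entries[OF assms that] .
  have "principal_block S (M ** N) $ i $ j = (principal_block S M ** principal_block S N) $ i $ j"
    for i j
  proof (cases "i \<in> S")
    case i: True
    show ?thesis
    proof (cases "j \<in> S")
      case True
      with i show ?thesis
        unfolding matrix_matrix_mult_def principal_block_def
        by (auto simp: N0 intro!: sum.cong)
    next
      case False
      with i show ?thesis
        unfolding matrix_matrix_mult_def principal_block_def
        by (auto intro!: sum.neutral)
    qed
  next
    case False
    have "(principal_block S M ** principal_block S N) $ i $ j
        = (\<Sum>l\<in>UNIV. if i = l then principal_block S N $ l $ j else 0)"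
      unfolding matrix_matrix_mult_def vec_lambda_beta using False
      by (intro sum.cong) (auto simp: principal_block_def)
    with False show ?thesis by (simp add: principal_block_def)
  qed
  thus ?thesis by (simp add: vec_eq_iff)
qed

lemma det_principal_block_mat:
  "det (principal_block S (mat c :: 'a::comm_ring_1^'n^'n)) = c ^ card S"
proof -
  have "det (principal_block S (mat c :: 'a^'n^'n)) = (\<Prod>i\<in>UNIV. if i \<in> S then c else 1)"
    by (subst det_diagonal) (auto simp: principal_block_def mat_def intro!: prod.cong)
  also have "\<dots> = c ^ card S"
    by (simp add: prod.If_cases Int_def)
  finally show ?thesis .
qed

lemma subspace_coordinate_form:
  fixes E :: "('a::field^'n) set"
  assumes "vec.subspace E"
  obtains P :: "'a^'n^'n" and S where "invertible P" "E = (*v) P ` coordinate_subspace S"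
proof -
  obtain Be where Be: "Be \<subseteq> E" "vec.independent Be" "vec.span Be = E"
    using vec.basis_exists[of E] assms vec.span_subspace by metis
  define Bs where "Bs = vec.extend_basis Be"
  have Bs: "Be \<subseteq> Bs" "vec.independent Bs" "vec.span Bs = UNIV"
    unfolding Bs_def using vec.extend_basis_superset[OF Be(2)]
      vec.independent_extend_basis[OF Be(2)] vec.span_extend_basis[OF Be(2)] by auto
  have finite: "finite Be" "finite Bs"
    using Be(2) Bs(2) vec.finiteI_independent by auto
  have "card Bs = CARD('n)"
    using vec.basis_card_eq_dim[of Bs UNIV] Bs vec_dim_card by auto
  then obtain f where f: "bij_betw f (UNIV::'n set) Bs"
    using finite_same_card_bij[of "UNIV::'n set" Bs] finite by auto
  define S where "S = {j. f j \<in> Be}"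
  have fS: "bij_betw f S Be"
    using f Bs(1) unfolding S_def bij_betw_def inj_on_def by auto
  define P :: "'a^'n^'n" where "P = (\<chi> i j. f j $ i)"
  have P: "P *v w = (\<Sum>j\<in>UNIV. w $ j *s f j)" for w
    unfolding matrix_mult_sum by (simp add: P_def column_def)
  have "surj ((*v) P)"
  proof -
    have "y \<in> range ((*v) P)" for y
    proof -
      obtain u where "y = (\<Sum>b\<in>Bs. u b *s b)"
        using vec.span_finite[OF finite(2)] Bs(3) by auto
      hence "y = P *v (\<chi> j. u (f j))"
        by (simp add: P sum.reindex_bij_betw[OF f, of "\<lambda>b. u b *s b", symmetric])
      thus ?thesis by blast
    qed
    thus ?thesis by auto
  qed
  hence "invertible P"
    using matrix_right_invertible_surjective invertible_right_inverse by blast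
  moreover have "E = (*v) P ` coordinate_subspace S"
  proof
    show "(*v) P ` coordinate_subspace S \<subseteq> E"
    proof clarify
      fix w :: "'a^'n" assume w: "w \<in> coordinate_subspace S"
      have "P *v w = (\<Sum>j\<in>S. w $ j *s f j)"
        unfolding P
        by (rule sum.mono_neutral_right) (use w in \<open>auto simp: coordinate_subspace_def\<close>)
      also have "\<dots> \<in> vec.span Be"
        using fS by (intro vec.span_sum vec.span_scale vec.span_base) (auto simp: bij_betw_def)
      finally show "P *v w \<in> E" using Be(3) by simp
    qed
    show "E \<subseteq> (*v) P ` coordinate_subspace S"
    proof
      fix e assume "e \<in> E"
      then obtain u where u: "e = (\<Sum>b\<in>Be. u b *s b)"
        using vec.span_finite[OF finite(1)] Be(3) by auto
      define w where "w = (\<chi> l. if l \<in> S then u (f l) else 0)"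
      have "P *v w = (\<Sum>l\<in>S. u (f l) *s f l)"
        unfolding P w_def by (rule sum.mono_neutral_cong_right) auto
      also have "\<dots> = e"
        using u sum.reindex_bij_betw[OF fS, of "\<lambda>b. u b *s b"] by simp
      finally show "e \<in> (*v) P ` coordinate_subspace S"
        by (auto simp: coordinate_subspace_def w_def intro!: image_eqI[of _ _ w])
    qed
  qed
  ultimately show thesis by (rule that)
qed

lemma invariant_subspace_character:
  fixes E :: "('a::field^'n) set"
  assumes "vec.subspace E" "E \<noteq> {0}" "E \<noteq> UNIV"
  obtains \<phi> :: "'a^'n^'n \<Rightarrow> 'a" and k where "0 < k" "k < CARD('n)"
    and "\<And>M W. \<forall>v\<in>E. W *v v \<in> E \<Longrightarrow> \<phi> (M ** W) = \<phi> M * \<phi> W"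
    and "\<And>c. \<phi> (mat c) = c ^ k"
proof -
  obtain P :: "'a^'n^'n" and S where P: "invertible P" and E: "E = (*v) P ` coordinate_subspace S"
    using subspace_coordinate_form[OF assms(1)] .
  define Q where "Q = matrix_inv P"
  have PQ: "P ** Q = mat 1" "Q ** P = mat 1"
    unfolding Q_def using matrix_inv_right_left[OF P] by auto
  have "S \<noteq> {}"
  proof
    assume "S = {}"
    hence "coordinate_subspace S = {0 :: 'a^'n}"
      by (auto simp: coordinate_subspace_def vec_eq_iff)
    hence "E = {0}" by (simp add: E matrix_vector_mult_0_right)
    with assms(2) show False ..
  qed
  moreover have "S \<noteq> UNIV"
  proof
    assume "S = UNIV"
    hence "P *v (Q *v y) \<in> E" for y by (auto simp: E coordinate_subspace_def)
    hence "E = UNIV" by (auto simp: matrix_vector_mul_assoc PQ)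
    with assms(3) show False ..
  qed
  ultimately have card: "0 < card S" "card S < CARD('n)"
    using psubset_card_mono[of UNIV S] by (auto simp: card_gt_0_iff)
  have invariant: "\<forall>v\<in>coordinate_subspace S. (Q ** W ** P) *v v \<in> coordinate_subspace S"
    if "\<forall>v\<in>E. W *v v \<in> E" for W
  proof
    fix w :: "'a^'n" assume "w \<in> coordinate_subspace S"
    hence "W *v (P *v w) \<in> E" using that by (auto simp: E)
    then obtain w' where w': "w' \<in> coordinate_subspace S" "W *v (P *v w) = P *v w'"
      by (auto simp: E)
    have "(Q ** W ** P) *v w = (Q ** P) *v w'"
      by (simp flip: matrix_vector_mul_assoc add: w'(2))
    thus "(Q ** W ** P) *v w \<in> coordinate_subspace S" using w'(1) by (simp add: PQ)
  qed
  \<comment> \<open>the determinant of \<open>W\<close> restricted to \<open>E\<close>, read off in the basis given by the columns of \<open>P\<close>\<close>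
  define \<phi> where "\<phi> W = det (principal_block S (Q ** W ** P))" for W
  have "\<phi> (M ** W) = \<phi> M * \<phi> W" if "\<forall>v\<in>E. W *v v \<in> E" for M W
  proof -
    have "Q ** (M ** W) ** P = (Q ** M ** P) ** (Q ** W ** P)"
      by (metis PQ(1) matrix_mul_assoc matrix_mul_rid)
    thus ?thesis
      unfolding \<phi>_def by (simp add: principal_block_mult[OF invariant[OF that]] det_mul)
  qed
  moreover have "\<phi> (mat c) = c ^ card S" for c
  proof -
    have "Q ** mat c ** P = mat c"
      by (metis PQ(2) mat_mult_commute matrix_mul_assoc matrix_mul_lid)
    thus ?thesis by (simp add: \<phi>_def det_principal_block_mat)
  qed
  ultimately show thesis using card that by blast
qed

lemma character_comm_prod:
  fixes \<phi> :: "'a::field^'n^'n \<Rightarrow> 'a"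
  assumes mult: "\<And>M W. W \<in> centralizer Y \<Longrightarrow> \<phi> (M ** W) = \<phi> M * \<phi> W"
    and one: "\<phi> (mat 1) = 1"
    and gens: "\<forall>i<g. invertible (A i) \<and> invertible (B i) \<and> A i \<in> centralizer Y \<and> B i \<in> centralizer Y"
  shows "\<phi> (comm_prod g A B) = 1"
proof -
  have inverse: "\<phi> W * \<phi> (matrix_inv W) = 1" if "invertible W" "W \<in> centralizer Y" for W
    using mult[OF matrix_inv_in_centralizer[OF that], of W] one
    by (simp add: matrix_inv_right[OF that(1)])
  have mcomm: "mcomm (A i) (B i) \<in> centralizer Y \<and> \<phi> (mcomm (A i) (B i)) = 1" if "i < g" for i
  proof
    have A: "invertible (A i)" "A i \<in> centralizer Y"
      and B: "invertible (B i)" "B i \<in> centralizer Y" using gens that by auto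
    show "mcomm (A i) (B i) \<in> centralizer Y" using mcomm_in_centralizer A B by blast
    have "\<phi> (mcomm (A i) (B i))
        = (\<phi> (A i) * \<phi> (matrix_inv (A i))) * (\<phi> (B i) * \<phi> (matrix_inv (B i)))"
      unfolding mcomm_def using A B
      by (simp add: mult matrix_inv_in_centralizer mult_in_centralizer ac_simps)
    also have "\<dots> = 1" using inverse A B by simp
    finally show "\<phi> (mcomm (A i) (B i)) = 1" .
  qed
  have "foldr (\<lambda>i M. mcomm (A i) (B i) ** M) xs (mat 1) \<in> centralizer Y
      \<and> \<phi> (foldr (\<lambda>i M. mcomm (A i) (B i) ** M) xs (mat 1)) = 1" if "set xs \<subseteq> {..<g}" for xs
    using that by (induction xs) (auto simp: one mat_in_centralizer mcomm mult mult_in_centralizer)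
  from this[of "[0..<g]"] show ?thesis unfolding comm_prod_def by (simp add: lessThan_atLeast0)
qed

lemma subspace_matrix_kernel: "vec.subspace {v. Y *v v = (0 :: 'a::field^'n)}"
proof -
  have "Y *v (c *s v) = c *s (Y *v v)" for c v
    by (simp add: vec_eq_iff matrix_vector_mult_def sum_distrib_left mult_ac)
  thus ?thesis by (simp add: vec.subspace_def matrix_vector_right_distrib)
qed

lemma singular_commuting_with_commutators_eq_0:
  fixes Y :: "'a::field^'n^'n"
  assumes prim: "primitive_root_of_unity \<zeta> CARD('n)"
    and gens: "\<forall>i<g. invertible (A i) \<and> invertible (B i) \<and> A i \<in> centralizer Y \<and> B i \<in> centralizer Y"
    and cp: "comm_prod g A B = mat \<zeta>"
    and singular: "det Y = 0"
  shows "Y = 0"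
proof (rule ccontr)
  assume "Y \<noteq> 0"
  define E where "E = {v. Y *v v = 0}"
  have "E \<noteq> {0}"
  proof -
    have "\<not> (\<exists>B. B ** Y = mat 1)"
      using singular invertible_det_nz invertible_left_inverse by blast
    then obtain v where "Y *v v = 0" "v \<noteq> 0"
      using matrix_left_invertible_ker by blast
    thus ?thesis by (auto simp: E_def)
  qed
  moreover have "E \<noteq> UNIV"
  proof
    assume "E = UNIV"
    hence "Y *v v = 0 *v v" for v by (auto simp: E_def set_eq_iff)
    with \<open>Y \<noteq> 0\<close> show False using matrix_eq by blast
  qed
  ultimately obtain \<phi> :: "'a^'n^'n \<Rightarrow> 'a" and k where k: "0 < k" "k < CARD('n)"
    and mult: "\<And>M W. \<forall>v\<in>E. W *v v \<in> E \<Longrightarrow> \<phi> (M ** W) = \<phi> M * \<phi> W"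
    and scalar: "\<And>c. \<phi> (mat c) = c ^ k"
    using invariant_subspace_character[OF subspace_matrix_kernel] unfolding E_def by metis
  have "\<phi> (comm_prod g A B) = 1"
  proof (rule character_comm_prod[OF _ _ gens])
    show "\<phi> (M ** W) = \<phi> M * \<phi> W" if "W \<in> centralizer Y" for M W
      using that by (intro mult) (auto simp: E_def kernel_invariant_centralizer)
    show "\<phi> (mat 1) = 1" by (simp add: scalar)
  qed
  with cp scalar have "\<zeta> ^ k = 1" by simp
  with prim k show False unfolding primitive_root_of_unity_def by blast
qed

definition charpoly :: "'a::field^'n^'n \<Rightarrow> 'a poly" where
  "charpoly Z = det (\<chi> i j. if i = j then [:Z$i$j, -1:] else [:Z$i$j:])"

lemma poly_charpoly: "poly (charpoly Z) x = det (Z - mat x)"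
  unfolding charpoly_def det_def poly_sum
  by (auto simp: mat_def poly_prod intro!: sum.cong prod.cong)

lemma coeff_charpoly_card: "Polynomial.coeff (charpoly (Z::'a::field^'n^'n)) CARD('n) = (-1) ^ CARD('n)"
proof -
  define C :: "'a poly^'n^'n" where "C = (\<chi> i j. if i = j then [:Z$i$j, -1:] else [:Z$i$j:])"
  let ?term = "\<lambda>p. of_int (sign p) * (\<Prod>i\<in>UNIV. C $ i $ p i)"
  have off_diagonal: "Polynomial.coeff (?term p) CARD('n) = 0" if "p permutes UNIV" "p \<noteq> id" for p
  proof -
    obtain k where k: "p k \<noteq> k" using \<open>p \<noteq> id\<close> by fastforce
    have "Polynomial.degree (\<Prod>i\<in>UNIV. C $ i $ p i) \<le> (\<Sum>i\<in>UNIV. Polynomial.degree (C $ i $ p i))"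
      using degree_prod_sum_le[of UNIV "\<lambda>i. C $ i $ p i"] by (simp add: o_def)
    also have "\<dots> < (\<Sum>i\<in>(UNIV::'n set). 1)"
      by (rule sum_strict_mono_ex1) (use k in \<open>auto simp: C_def intro!: exI[of _ k]\<close>)
    finally have "Polynomial.degree (\<Prod>i\<in>UNIV. C $ i $ p i) < CARD('n)" by simp
    thus ?thesis by (simp add: of_int_poly coeff_eq_0)
  qed
  have "Polynomial.coeff (charpoly Z) CARD('n) = (\<Sum>p | p permutes UNIV. Polynomial.coeff (?term p) CARD('n))"
    unfolding charpoly_def det_def coeff_sum C_def ..
  also have "\<dots> = (\<Sum>p\<in>{id}. Polynomial.coeff (?term p) CARD('n))"
    using off_diagonal by (intro sum.mono_neutral_right) (auto simp: permutes_id finite_permutations)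
  also have "\<dots> = Polynomial.coeff (\<Prod>i\<in>UNIV. [:Z$i$i, -1:]) CARD('n)"
    by (simp add: sign_id C_def)
  also have "\<dots> = (-1) ^ CARD('n)"
  proof -
    have "Polynomial.degree (\<Prod>i\<in>(UNIV::'n set). [:Z$i$i, -1:]) = CARD('n)"
      by (subst degree_prod_eq_sum_degree) auto
    moreover have "Polynomial.lead_coeff (\<Prod>i\<in>(UNIV::'n set). [:Z$i$i, -1:]) = (-1) ^ CARD('n)"
      by (simp add: lead_coeff_prod)
    ultimately show ?thesis by simp
  qed
  finally show ?thesis .
qed

lemma alg_closed_eigenvalue_exists:
  fixes Z :: "'a::alg_closed_field^'n^'n"
  obtains x where "det (Z - mat x) = 0"
proof -
  have "CARD('n) \<le> Polynomial.degree (charpoly Z)"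
    by (rule le_degree) (simp add: coeff_charpoly_card)
  moreover have "0 < CARD('n)" by (rule finite_UNIV_card_ge_0) simp
  ultimately have "0 < Polynomial.degree (charpoly Z)" by linarith
  then obtain x where "poly (charpoly Z) x = 0" using alg_closed_imp_poly_has_root by blast
  thus thesis using that by (simp add: poly_charpoly)
qed

definition map_matrix :: "('a \<Rightarrow> 'b) \<Rightarrow> 'a^'n^'m \<Rightarrow> 'b^'n^'m" where
  "map_matrix f M = (\<chi> i j. f (M$i$j))"

lemma map_matrix_to_ac_mult: "map_matrix to_ac (M ** N) = map_matrix to_ac M ** map_matrix to_ac N"
  by (simp add: vec_eq_iff map_matrix_def matrix_matrix_mult_def to_ac_sum)

lemma map_matrix_to_ac_mat: "map_matrix to_ac (mat c) = mat (to_ac c)"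
  by (simp add: vec_eq_iff map_matrix_def mat_def)

lemma det_map_matrix_to_ac: "det (map_matrix to_ac M) = to_ac (det M)"
  unfolding det_def by (simp add: to_ac_sum to_ac_prod map_matrix_def)

lemma map_matrix_to_ac_eq_mat:
  assumes "map_matrix to_ac Z = mat \<theta>"
  shows "Z = mat (of_ac \<theta>)"
proof -
  have "to_ac (Z$i$j) = (if i = j then \<theta> else 0)" for i j
    using assms by (simp add: vec_eq_iff map_matrix_def mat_def)
  thus ?thesis
    by (auto simp: vec_eq_iff mat_def intro: of_ac_eqI[symmetric]) (metis to_ac_eq_0_iff)
qed

lemma map_matrix_to_ac_matrix_inv:
  fixes M :: "'a::field^'n^'n"
  assumes "invertible M"
  shows "matrix_inv (map_matrix to_ac M) = map_matrix to_ac (matrix_inv M)"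
  by (rule matrix_inv_unique)
    (simp_all add: matrix_inv_right_left[OF assms] map_matrix_to_ac_mat flip: map_matrix_to_ac_mult)

lemma map_matrix_to_ac_comm_prod:
  assumes "\<forall>i<g. invertible (A i) \<and> invertible (B i)"
  shows "map_matrix to_ac (comm_prod g A B)
       = comm_prod g (\<lambda>i. map_matrix to_ac (A i)) (\<lambda>i. map_matrix to_ac (B i))"
proof -
  have "map_matrix to_ac (foldr (\<lambda>i M. mcomm (A i) (B i) ** M) xs (mat 1))
      = foldr (\<lambda>i M. mcomm (map_matrix to_ac (A i)) (map_matrix to_ac (B i)) ** M) xs (mat 1)"
    if "set xs \<subseteq> {..<g}" for xs
    using that assms
    by (induction xs) (auto simp: map_matrix_to_ac_mat map_matrix_to_ac_mult mcomm_def
        map_matrix_to_ac_matrix_inv)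
  from this[of "[0..<g]"] show ?thesis unfolding comm_prod_def by (simp add: lessThan_atLeast0)
qed

theorem proposition3p1:
  fixes \<zeta> :: "'a::field" and g :: nat
    and A B :: "nat \<Rightarrow> 'a ^ 'n::finite ^ 'n" and Z :: "'a ^ 'n ^ 'n"
  assumes "primitive_root_of_unity \<zeta> CARD('n)"
    and "g \<ge> 1"
    and "\<forall>i<g. A i \<in> SL \<and> B i \<in> SL"
    and "comm_prod g A B = mat \<zeta>"
    and "\<forall>i<g. Z ** A i = A i ** Z \<and> Z ** B i = B i ** Z"
  shows "\<exists>c. Z = mat c"
proof -
  let ?f = "map_matrix (to_ac :: 'a \<Rightarrow> 'a alg_closure)"
  have inv: "\<forall>i<g. invertible (A i) \<and> invertible (B i)"
    using assms(3) by (simp add: SL_def invertible_det_nz)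
  obtain \<theta> where \<theta>: "det (?f Z - mat \<theta>) = 0" by (rule alg_closed_eigenvalue_exists)
  have "?f Z - mat \<theta> = 0"
  proof (rule singular_commuting_with_commutators_eq_0[OF _ _ _ \<theta>])
    show "primitive_root_of_unity (to_ac \<zeta>) CARD('n)"
      using assms(1) unfolding primitive_root_of_unity_def by (metis to_ac_1 to_ac_eq_iff to_ac_power)
    show "comm_prod g (\<lambda>i. ?f (A i)) (\<lambda>i. ?f (B i)) = mat (to_ac \<zeta>)"
      using assms(4) by (simp flip: map_matrix_to_ac_comm_prod[OF inv] add: map_matrix_to_ac_mat)
    have "?f W \<in> centralizer (?f Z - mat \<theta>)" if "Z ** W = W ** Z" for W
      using that by (simp add: centralizer_def matrix_diff_ldistrib matrix_diff_rdistrib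
          mat_mult_commute flip: map_matrix_to_ac_mult)
    thus "\<forall>i<g. invertible (?f (A i)) \<and> invertible (?f (B i))
        \<and> ?f (A i) \<in> centralizer (?f Z - mat \<theta>) \<and> ?f (B i) \<in> centralizer (?f Z - mat \<theta>)"
      using assms(3,5) by (simp add: SL_def invertible_det_nz det_map_matrix_to_ac)
  qed
  hence "Z = mat (of_ac \<theta>)" by (intro map_matrix_to_ac_eq_mat) simp
  thus ?thesis ..
qed

end
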